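(* Let $p\colon X\to B_1$ and $q\colon Y\to B_2$ be Boolean sets and $\varphi\colon X\to Y$ a morphism of Boolean sets. Then $\varphi(x\vee y)=\varphi(x)\vee\varphi(y)$ for all compatible $x,y\in X$.
   Context: Convention: a "Boolean algebra" means a generalized Boolean algebra (relatively complemented distributive lattice with $0$); morphisms of Boolean algebras preserve lattice operations, $0$ and relative complements. Presheaf of sets over a meet semilattice $E$: pairwise disjoint sets $X_e$, restriction maps $x\mapsto x|^e_f$, $X_e\to X_f$ for $e\ge f$, with $|^e_e=\mathrm{id}$ and $(x|^e_f)|^f_g=x|^e_g$; $p(x)=e$ iff $x\in X_e$; global support: all $X_e\ne\emptyset$. Order: $x\le y$ iff $p(x)\le p(y)$ and $x=y|^{p(y)}_{p(x)}$. Compatibility $x\sim y$: $x\wedge y$ exists and $p(x\wedge y)=p(x)\wedge p(y)$. A Boolean set is a presheaf $p\colon X\to B$ with global support over a Boolean algebra $B$ such that $(X,\le)$ has least element $0$, compatible pairs have joins, and $p(x)=0\Rightarrow x=0$. A morphism of Boolean sets is a map $\varphi\colon X\to Y$ with a morphism of Boolean algebras $\overline{\varphi}\colon B_1\to B_2$ such that $q\varphi=\overline{\varphi}p$ and $\varphi(x|^a_b)=\varphi(x)|^{\overline{\varphi}(a)}_{\overline{\varphi}(b)}$ for all $a\ge b$ and $x\in X_a$. *)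

theory Defs
  imports Main
begin

definition is_lub :: "('a \<Rightarrow> 'a \<Rightarrow> bool) \<Rightarrow> 'a set \<Rightarrow> 'a set \<Rightarrow> 'a \<Rightarrow> bool" where
  "is_lub le S A u \<longleftrightarrow> u \<in> S \<and> (\<forall>a\<in>A. le a u) \<and> (\<forall>v\<in>S. (\<forall>a\<in>A. le a v) \<longrightarrow> le u v)"

definition is_glb :: "('a \<Rightarrow> 'a \<Rightarrow> bool) \<Rightarrow> 'a set \<Rightarrow> 'a set \<Rightarrow> 'a \<Rightarrow> bool" where
  "is_glb le S A m \<longleftrightarrow> m \<in> S \<and> (\<forall>a\<in>A. le m a) \<and> (\<forall>v\<in>S. (\<forall>a\<in>A. le v a) \<longrightarrow> le v m)"

definition partial_order_on' :: "'a set \<Rightarrow> ('a \<Rightarrow> 'a \<Rightarrow> bool) \<Rightarrow> bool" where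
  "partial_order_on' S le \<longleftrightarrow>
     (\<forall>a\<in>S. le a a) \<and>
     (\<forall>a\<in>S. \<forall>b\<in>S. le a b \<and> le b a \<longrightarrow> a = b) \<and>
     (\<forall>a\<in>S. \<forall>b\<in>S. \<forall>c\<in>S. le a b \<and> le b c \<longrightarrow> le a c)"

record 'b balg =
  bcarrier :: "'b set"
  ble :: "'b \<Rightarrow> 'b \<Rightarrow> bool"

definition bmeet :: "'b balg \<Rightarrow> 'b \<Rightarrow> 'b \<Rightarrow> 'b" where
  "bmeet B a b = (THE m. is_glb (ble B) (bcarrier B) {a, b} m)"

definition bjoin :: "'b balg \<Rightarrow> 'b \<Rightarrow> 'b \<Rightarrow> 'b" where
  "bjoin B a b = (THE j. is_lub (ble B) (bcarrier B) {a, b} j)"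

definition bzero :: "'b balg \<Rightarrow> 'b" where
  "bzero B = (THE z. z \<in> bcarrier B \<and> (\<forall>a\<in>bcarrier B. ble B z a))"

definition bdiff :: "'b balg \<Rightarrow> 'b \<Rightarrow> 'b \<Rightarrow> 'b" where
  "bdiff B b a = (THE c. c \<in> bcarrier B \<and> bmeet B c (bmeet B a b) = bzero B
                         \<and> bjoin B c (bmeet B a b) = b)"

definition gen_boolean_algebra :: "'b balg \<Rightarrow> bool" where
  "gen_boolean_algebra B \<longleftrightarrow>
     partial_order_on' (bcarrier B) (ble B) \<and>
     (\<forall>a\<in>bcarrier B. \<forall>b\<in>bcarrier B. \<exists>m. is_glb (ble B) (bcarrier B) {a, b} m) \<and>
     (\<forall>a\<in>bcarrier B. \<forall>b\<in>bcarrier B. \<exists>j. is_lub (ble B) (bcarrier B) {a, b} j) \<and>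
     (\<forall>a\<in>bcarrier B. \<forall>b\<in>bcarrier B. \<forall>c\<in>bcarrier B.
        bmeet B a (bjoin B b c) = bjoin B (bmeet B a b) (bmeet B a c)) \<and>
     (\<exists>z\<in>bcarrier B. \<forall>a\<in>bcarrier B. ble B z a) \<and>
     (\<forall>a\<in>bcarrier B. \<forall>b\<in>bcarrier B. ble B a b \<longrightarrow>
        (\<exists>c\<in>bcarrier B. bmeet B a c = bzero B \<and> bjoin B a c = b))"

definition balg_hom :: "'b balg \<Rightarrow> 'c balg \<Rightarrow> ('b \<Rightarrow> 'c) \<Rightarrow> bool" where
  "balg_hom B1 B2 f \<longleftrightarrow>
     (\<forall>a\<in>bcarrier B1. f a \<in> bcarrier B2) \<and>
     (\<forall>a\<in>bcarrier B1. \<forall>b\<in>bcarrier B1. f (bmeet B1 a b) = bmeet B2 (f a) (f b)) \<and>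
     (\<forall>a\<in>bcarrier B1. \<forall>b\<in>bcarrier B1. f (bjoin B1 a b) = bjoin B2 (f a) (f b)) \<and>
     f (bzero B1) = bzero B2 \<and>
     (\<forall>a\<in>bcarrier B1. \<forall>b\<in>bcarrier B1. f (bdiff B1 b a) = bdiff B2 (f b) (f a))"

text \<open>A presheaf over B: the set X (disjoint union of the fibres X_e), the projection p
  (x in X_e iff p x = e), and restriction  restr x f = x|^{p x}_f  for f \<le> p x.\<close>
record ('x, 'b) bset =
  elts :: "'x set"
  base :: "'b balg"
  proj :: "'x \<Rightarrow> 'b"
  restr :: "'x \<Rightarrow> 'b \<Rightarrow> 'x"

definition presheaf :: "('x, 'b) bset \<Rightarrow> bool" where
  "presheaf S \<longleftrightarrow>
     (\<forall>x\<in>elts S. proj S x \<in> bcarrier (base S)) \<and>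
     (\<forall>x\<in>elts S. \<forall>f\<in>bcarrier (base S). ble (base S) f (proj S x) \<longrightarrow>
        restr S x f \<in> elts S \<and> proj S (restr S x f) = f) \<and>
     (\<forall>x\<in>elts S. restr S x (proj S x) = x) \<and>
     (\<forall>x\<in>elts S. \<forall>f\<in>bcarrier (base S). \<forall>g\<in>bcarrier (base S).
        ble (base S) g f \<and> ble (base S) f (proj S x) \<longrightarrow>
        restr S (restr S x f) g = restr S x g)"

definition global_support :: "('x, 'b) bset \<Rightarrow> bool" where
  "global_support S \<longleftrightarrow> (\<forall>e\<in>bcarrier (base S). \<exists>x\<in>elts S. proj S x = e)"

definition xle :: "('x, 'b) bset \<Rightarrow> 'x \<Rightarrow> 'x \<Rightarrow> bool" where
  "xle S x y \<longleftrightarrow> ble (base S) (proj S x) (proj S y) \<and> x = restr S y (proj S x)"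

definition compat :: "('x, 'b) bset \<Rightarrow> 'x \<Rightarrow> 'x \<Rightarrow> bool" where
  "compat S x y \<longleftrightarrow>
     (\<exists>m. is_glb (xle S) (elts S) {x, y} m \<and>
          proj S m = bmeet (base S) (proj S x) (proj S y))"

definition bs_zero :: "('x, 'b) bset \<Rightarrow> 'x" where
  "bs_zero S = (THE z. z \<in> elts S \<and> (\<forall>x\<in>elts S. xle S z x))"

definition boolean_set :: "('x, 'b) bset \<Rightarrow> bool" where
  "boolean_set S \<longleftrightarrow>
     gen_boolean_algebra (base S) \<and> presheaf S \<and> global_support S \<and>
     (\<exists>z\<in>elts S. \<forall>x\<in>elts S. xle S z x) \<and>
     (\<forall>x\<in>elts S. \<forall>y\<in>elts S. compat S x y \<longrightarrow> (\<exists>j. is_lub (xle S) (elts S) {x, y} j)) \<and>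
     (\<forall>x\<in>elts S. proj S x = bzero (base S) \<longrightarrow> x = bs_zero S)"

definition bset_morphism ::
  "('x, 'b) bset \<Rightarrow> ('y, 'c) bset \<Rightarrow> ('x \<Rightarrow> 'y) \<Rightarrow> ('b \<Rightarrow> 'c) \<Rightarrow> bool" where
  "bset_morphism S T \<phi> \<phi>b \<longleftrightarrow>
     (\<forall>x\<in>elts S. \<phi> x \<in> elts T) \<and>
     balg_hom (base S) (base T) \<phi>b \<and>
     (\<forall>x\<in>elts S. proj T (\<phi> x) = \<phi>b (proj S x)) \<and>
     (\<forall>x\<in>elts S. \<forall>b\<in>bcarrier (base S). ble (base S) b (proj S x) \<longrightarrow>
        \<phi> (restr S x b) = restr T (\<phi> x) (\<phi>b b))"

end

theory Submission
  imports Defs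
begin

text \<open>The support of the join of compatible x and y is the join of their supports, and a
  morphism preserves the order and binary joins of supports. Hence it suffices that, in a
  Boolean set, an upper bound a of u and w whose support is p u \<or> p w is their join: u and w
  are restrictions of a, hence compatible, so their join J exists; J lies below a and has the
  same support, and an element below another one with the same support coincides with it.\<close>

lemma is_lub_unique:
  assumes "partial_order_on' S le" "is_lub le S A u" "is_lub le S A v"
  shows "u = v"
  using assms unfolding partial_order_on'_def is_lub_def by blast

lemma is_glb_unique:
  assumes "partial_order_on' S le" "is_glb le S A u" "is_glb le S A v"
  shows "u = v"
  using assms unfolding partial_order_on'_def is_glb_def by blast

lemma gen_boolean_algebra_partial_order:
  "gen_boolean_algebra B \<Longrightarrow> partial_order_on' (bcarrier B) (ble B)"
  unfolding gen_boolean_algebra_def by blast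

lemma bjoin_is_lub:
  assumes B: "gen_boolean_algebra B" and "a \<in> bcarrier B" "b \<in> bcarrier B"
  shows "is_lub (ble B) (bcarrier B) {a, b} (bjoin B a b)"
proof -
  from assms obtain j where j: "is_lub (ble B) (bcarrier B) {a, b} j"
    unfolding gen_boolean_algebra_def by blast
  show ?thesis
    unfolding bjoin_def
    by (rule theI[of _ j]) (use j is_lub_unique[OF gen_boolean_algebra_partial_order[OF B]] in blast)+
qed

lemma bmeet_is_glb:
  assumes B: "gen_boolean_algebra B" and "a \<in> bcarrier B" "b \<in> bcarrier B"
  shows "is_glb (ble B) (bcarrier B) {a, b} (bmeet B a b)"
proof -
  from assms obtain m where m: "is_glb (ble B) (bcarrier B) {a, b} m"
    unfolding gen_boolean_algebra_def by blast
  show ?thesis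
    unfolding bmeet_def
    by (rule theI[of _ m]) (use m is_glb_unique[OF gen_boolean_algebra_partial_order[OF B]] in blast)+
qed

lemma bjoin_eq_right:
  assumes B: "gen_boolean_algebra B" and a: "a \<in> bcarrier B" and b: "b \<in> bcarrier B"
    and ab: "ble B a b"
  shows "bjoin B a b = b"
proof -
  have po: "partial_order_on' (bcarrier B) (ble B)"
    by (rule gen_boolean_algebra_partial_order[OF B])
  then have "ble B b b" using b unfolding partial_order_on'_def by blast
  then have "is_lub (ble B) (bcarrier B) {a, b} b"
    using ab b unfolding is_lub_def by auto
  then show ?thesis
    using is_lub_unique[OF po bjoin_is_lub[OF B a b]] by simp
qed

lemma balg_hom_mono:
  assumes B1: "gen_boolean_algebra B1" and B2: "gen_boolean_algebra B2"
    and f: "balg_hom B1 B2 f"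
    and a: "a \<in> bcarrier B1" and b: "b \<in> bcarrier B1" and ab: "ble B1 a b"
  shows "ble B2 (f a) (f b)"
proof -
  have fab: "f a \<in> bcarrier B2" "f b \<in> bcarrier B2"
    using f a b unfolding balg_hom_def by auto
  have "f b = bjoin B2 (f a) (f b)"
    using f a b bjoin_eq_right[OF B1 a b ab] unfolding balg_hom_def by metis
  then show ?thesis
    using bjoin_is_lub[OF B2 fab] unfolding is_lub_def by auto
qed

lemma presheaf_proj_in_carrier:
  "presheaf S \<Longrightarrow> x \<in> elts S \<Longrightarrow> proj S x \<in> bcarrier (base S)"
  unfolding presheaf_def by blast

lemma presheaf_restr:
  assumes "presheaf S" "x \<in> elts S" "f \<in> bcarrier (base S)" "ble (base S) f (proj S x)"
  shows "restr S x f \<in> elts S" and "proj S (restr S x f) = f"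
  using assms unfolding presheaf_def by blast+

lemma presheaf_restr_proj: "presheaf S \<Longrightarrow> x \<in> elts S \<Longrightarrow> restr S x (proj S x) = x"
  unfolding presheaf_def by blast

lemma presheaf_restr_restr:
  assumes "presheaf S" "x \<in> elts S" "f \<in> bcarrier (base S)" "g \<in> bcarrier (base S)"
    "ble (base S) g f" "ble (base S) f (proj S x)"
  shows "restr S (restr S x f) g = restr S x g"
  using assms unfolding presheaf_def by blast

lemma xle_restr:
  assumes "presheaf S" "x \<in> elts S" "f \<in> bcarrier (base S)" "ble (base S) f (proj S x)"
  shows "xle S (restr S x f) x"
  using assms presheaf_restr[OF assms] unfolding xle_def by simp

lemma xle_restrI:
  assumes P: "presheaf S" and x: "x \<in> elts S" and v: "v \<in> elts S" and xv: "xle S x v"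
    and e: "e \<in> bcarrier (base S)"
    and "ble (base S) (proj S x) e" and "ble (base S) e (proj S v)"
  shows "xle S x (restr S v e)"
  using assms presheaf_restr[OF P v e] presheaf_restr_restr[OF P v e presheaf_proj_in_carrier[OF P x]]
  unfolding xle_def by simp

lemma xle_trans:
  assumes P: "presheaf S" and po: "partial_order_on' (bcarrier (base S)) (ble (base S))"
    and x: "x \<in> elts S" and y: "y \<in> elts S" and z: "z \<in> elts S"
    and "xle S x y" "xle S y z"
  shows "xle S x z"
proof -
  have "ble (base S) (proj S x) (proj S z)"
    using assms presheaf_proj_in_carrier[OF P] unfolding xle_def partial_order_on'_def by metis
  moreover have "restr S z (proj S x) = x"
    using assms presheaf_restr_restr[OF P z] presheaf_proj_in_carrier[OF P] unfolding xle_def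
    by metis
  ultimately show ?thesis unfolding xle_def by simp
qed

lemma xle_proj_eq_imp_eq:
  "presheaf S \<Longrightarrow> y \<in> elts S \<Longrightarrow> xle S x y \<Longrightarrow> proj S x = proj S y \<Longrightarrow> x = y"
  using presheaf_restr_proj unfolding xle_def by metis

lemma proj_is_lub:
  assumes B: "gen_boolean_algebra (base S)" and P: "presheaf S"
    and x: "x \<in> elts S" and y: "y \<in> elts S" and j: "is_lub (xle S) (elts S) {x, y} j"
  shows "proj S j = bjoin (base S) (proj S x) (proj S y)"
proof -
  let ?B = "base S" and ?e = "bjoin (base S) (proj S x) (proj S y)"
  have jel: "j \<in> elts S" and xj: "xle S x j" and yj: "xle S y j"
    using j unfolding is_lub_def by auto
  have e: "is_lub (ble ?B) (bcarrier ?B) {proj S x, proj S y} ?e"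
    using bjoin_is_lub[OF B] presheaf_proj_in_carrier[OF P] x y by blast
  then have ec: "?e \<in> bcarrier ?B" and xe: "ble ?B (proj S x) ?e" and ye: "ble ?B (proj S y) ?e"
    unfolding is_lub_def by auto
  have ej: "ble ?B ?e (proj S j)"
    using e xj yj presheaf_proj_in_carrier[OF P jel] unfolding is_lub_def xle_def by auto
  have "xle S x (restr S j ?e)" "xle S y (restr S j ?e)"
    using xle_restrI[OF P _ jel _ ec] x y xj yj xe ye ej by auto
  then have "xle S j (restr S j ?e)"
    using j presheaf_restr(1)[OF P jel ec ej] unfolding is_lub_def by blast
  then have "ble ?B (proj S j) ?e"
    using presheaf_restr(2)[OF P jel ec ej] unfolding xle_def by simp
  then show ?thesis
    using gen_boolean_algebra_partial_order[OF B] presheaf_proj_in_carrier[OF P jel] ec ej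
    unfolding partial_order_on'_def by blast
qed

lemma compat_restr:
  assumes B: "gen_boolean_algebra (base S)" and P: "presheaf S" and a: "a \<in> elts S"
    and c: "c \<in> bcarrier (base S)" "ble (base S) c (proj S a)"
    and d: "d \<in> bcarrier (base S)" "ble (base S) d (proj S a)"
  shows "compat S (restr S a c) (restr S a d)"
proof -
  let ?B = "base S" and ?m = "bmeet (base S) c d"
  have po: "partial_order_on' (bcarrier ?B) (ble ?B)"
    by (rule gen_boolean_algebra_partial_order[OF B])
  have m: "is_glb (ble ?B) (bcarrier ?B) {c, d} ?m"
    by (rule bmeet_is_glb[OF B c(1) d(1)])
  then have mc: "?m \<in> bcarrier ?B" and mlc: "ble ?B ?m c" and mld: "ble ?B ?m d"
    unfolding is_glb_def by auto
  have ma: "ble ?B ?m (proj S a)"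
    using po mc mlc c presheaf_proj_in_carrier[OF P a] unfolding partial_order_on'_def by blast
  note restr_c = presheaf_restr[OF P a c] and restr_d = presheaf_restr[OF P a d]
    and restr_m = presheaf_restr[OF P a mc ma]
  have "is_glb (xle S) (elts S) {restr S a c, restr S a d} (restr S a ?m)"
    unfolding is_glb_def
  proof (intro conjI ballI impI)
    show "restr S a ?m \<in> elts S" by (rule restr_m(1))
  next
    fix z assume "z \<in> {restr S a c, restr S a d}"
    then show "xle S (restr S a ?m) z"
      using xle_restrI[OF P restr_m(1) a xle_restr[OF P a mc ma]] restr_m(2)
        mlc mld c d by auto
  next
    fix v assume v: "v \<in> elts S" and lb: "\<forall>z\<in>{restr S a c, restr S a d}. xle S v z"
    then have "ble ?B (proj S v) c" "ble ?B (proj S v) d"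
      using restr_c restr_d unfolding xle_def by auto
    then have vm: "ble ?B (proj S v) ?m"
      using m presheaf_proj_in_carrier[OF P v] unfolding is_glb_def by auto
    have "xle S v a"
      using lb xle_trans[OF P po v restr_c(1) a] xle_restr[OF P a c] by blast
    then show "xle S v (restr S a ?m)"
      using xle_restrI[OF P v a _ mc vm ma] by blast
  qed
  then show ?thesis
    unfolding compat_def using restr_c(2) restr_d(2) restr_m(2) by auto
qed

lemma is_lub_if_proj_eq_bjoin:
  assumes T: "boolean_set T" and u: "u \<in> elts T" and w: "w \<in> elts T" and a: "a \<in> elts T"
    and ua: "xle T u a" and wa: "xle T w a"
    and pa: "proj T a = bjoin (base T) (proj T u) (proj T w)"
  shows "is_lub (xle T) (elts T) {u, w} a"
proof -
  have B: "gen_boolean_algebra (base T)" and P: "presheaf T"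
    using T unfolding boolean_set_def by auto
  have "compat T (restr T a (proj T u)) (restr T a (proj T w))"
    using compat_restr[OF B P a] presheaf_proj_in_carrier[OF P] u w ua wa
    unfolding xle_def by blast
  then have "compat T u w"
    using ua wa unfolding xle_def by simp
  then obtain J where J: "is_lub (xle T) (elts T) {u, w} J"
    using T u w unfolding boolean_set_def by blast
  have "xle T J a"
    using J ua wa a unfolding is_lub_def by blast
  moreover have "proj T J = proj T a"
    using proj_is_lub[OF B P u w J] pa by simp
  ultimately have "J = a"
    using xle_proj_eq_imp_eq[OF P a] by blast
  then show ?thesis using J by simp
qed

lemma bset_morphism_xle:
  assumes S: "boolean_set S" and T: "boolean_set T" and M: "bset_morphism S T \<phi> \<phi>b"
    and x: "x \<in> elts S" and y: "y \<in> elts S" and xy: "xle S x y"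
  shows "xle T (\<phi> x) (\<phi> y)"
proof -
  have P: "presheaf S" using S unfolding boolean_set_def by blast
  have px: "proj S x \<in> bcarrier (base S)" "ble (base S) (proj S x) (proj S y)"
    using xy presheaf_proj_in_carrier[OF P x] unfolding xle_def by auto
  have "ble (base T) (\<phi>b (proj S x)) (\<phi>b (proj S y))"
    using balg_hom_mono[of "base S" "base T" \<phi>b] S T M px presheaf_proj_in_carrier[OF P y]
    unfolding boolean_set_def bset_morphism_def by blast
  moreover have "restr T (\<phi> y) (\<phi>b (proj S x)) = \<phi> x"
    using M y px xy unfolding bset_morphism_def xle_def by metis
  moreover have "proj T (\<phi> x) = \<phi>b (proj S x)" "proj T (\<phi> y) = \<phi>b (proj S y)"
    using M x y unfolding bset_morphism_def by auto
  ultimately show ?thesis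
    unfolding xle_def by simp
qed

theorem lemma1p8:
  fixes S :: "('x, 'b) bset" and T :: "('y, 'c) bset"
    and \<phi> :: "'x \<Rightarrow> 'y" and \<phi>b :: "'b \<Rightarrow> 'c"
  assumes "boolean_set S" and "boolean_set T"
    and "bset_morphism S T \<phi> \<phi>b"
    and "x \<in> elts S" and "y \<in> elts S" and "compat S x y"
    and "is_lub (xle S) (elts S) {x, y} j"
  shows "is_lub (xle T) (elts T) {\<phi> x, \<phi> y} (\<phi> j)"
proof -
  note S = assms(1) and T = assms(2) and M = assms(3) and x = assms(4) and y = assms(5)
    and j = assms(7)
  have P: "presheaf S" using S unfolding boolean_set_def by blast
  have jel: "j \<in> elts S" and "xle S x j" "xle S y j"
    using j unfolding is_lub_def by auto
  then have "xle T (\<phi> x) (\<phi> j)" "xle T (\<phi> y) (\<phi> j)"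
    using bset_morphism_xle[OF S T M] x y by auto
  moreover have "proj S j = bjoin (base S) (proj S x) (proj S y)"
    using proj_is_lub[OF _ P x y j] S unfolding boolean_set_def by blast
  then have "proj T (\<phi> j) = bjoin (base T) (proj T (\<phi> x)) (proj T (\<phi> y))"
    using M x y jel presheaf_proj_in_carrier[OF P] unfolding bset_morphism_def balg_hom_def
    by metis
  ultimately show ?thesis
    using is_lub_if_proj_eq_bjoin[OF T] M x y jel unfolding bset_morphism_def by blast
qed

end
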